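(* Let $(G,k)$ be a connected quadratic Lie group whose Lie algebra $\mathcal G$ is nilpotent of step at most $3$ (i.e. $[\mathcal G,[\mathcal G,[\mathcal G,\mathcal G]]]=0$). Then there exist a linear endomorphism $f$ of $\mathcal G$ with $f([x,y])-[f(x),f(y)]\in\mathcal Z(\mathcal G)$ for all $x,y$ and an invertible linear endomorphism $d$ with $d[x,y]=[dx,fy]+[fx,dy]$ for all $x,y$, such that the left invariant semi-Riemannian metric $\langle x,y\rangle=k(dx,dy)$ on $G$ is flat (and geodesically complete).
   Context: A quadratic Lie group is a Lie group $G$ with a bi-invariant semi-Riemannian metric $k$; equivalently its Lie algebra carries a nondegenerate symmetric bilinear form $k$ with each $\mathrm{ad}_x$ $k$-skew-symmetric. $\mathcal Z(\mathcal G)$ denotes the center of $\mathcal G$. *)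

theory Defs
  imports "HOL-Analysis.Analysis"
begin

text \<open>A finite-dimensional real Lie algebra is modelled by a bracket on a Euclidean space.\<close>

definition bilin :: "('a::real_vector \<Rightarrow> 'a \<Rightarrow> 'b::real_vector) \<Rightarrow> bool" where
  "bilin B \<longleftrightarrow> (\<forall>x. linear (B x)) \<and> (\<forall>y. linear (\<lambda>x. B x y))"

definition lie_algebra :: "('a::real_vector \<Rightarrow> 'a \<Rightarrow> 'a) \<Rightarrow> bool" where
  "lie_algebra br \<longleftrightarrow> bilin br \<and> (\<forall>x. br x x = 0)
     \<and> (\<forall>x y z. br x (br y z) + br y (br z x) + br z (br x y) = 0)"

definition quadratic_lie_algebra :: "('a::real_vector \<Rightarrow> 'a \<Rightarrow> 'a) \<Rightarrow> ('a \<Rightarrow> 'a \<Rightarrow> real) \<Rightarrow> bool" where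
  "quadratic_lie_algebra br k \<longleftrightarrow> lie_algebra br \<and> bilin k \<and> (\<forall>x y. k x y = k y x)
     \<and> (\<forall>x. (\<forall>y. k x y = 0) \<longrightarrow> x = 0)
     \<and> (\<forall>x y z. k (br x y) z + k y (br x z) = 0)"

definition center :: "('a::real_vector \<Rightarrow> 'a \<Rightarrow> 'a) \<Rightarrow> 'a set" where
  "center br = {z. \<forall>x. br z x = 0}"

text \<open>Levi-Civita connection of the left-invariant metric g, via the Koszul formula
  on left-invariant vector fields.\<close>
definition LC_conn :: "('a::real_vector \<Rightarrow> 'a \<Rightarrow> 'a) \<Rightarrow> ('a \<Rightarrow> 'a \<Rightarrow> real) \<Rightarrow> 'a \<Rightarrow> 'a \<Rightarrow> 'a" where
  "LC_conn br g x y = (THE w. \<forall>z. 2 * g w z = g (br x y) z - g (br y z) x + g (br z x) y)"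

definition flat_left_inv :: "('a::real_vector \<Rightarrow> 'a \<Rightarrow> 'a) \<Rightarrow> ('a \<Rightarrow> 'a \<Rightarrow> real) \<Rightarrow> bool" where
  "flat_left_inv br g \<longleftrightarrow> (\<forall>x y z.
     LC_conn br g x (LC_conn br g y z) - LC_conn br g y (LC_conn br g x z)
       - LC_conn br g (br x y) z = 0)"

text \<open>Geodesic completeness of a left-invariant metric on a connected Lie group:
  every solution of the Euler--Arnold equation u' = - nabla_u u extends to all of R.\<close>
definition geod_complete_left_inv :: "('a::real_normed_vector \<Rightarrow> 'a \<Rightarrow> 'a) \<Rightarrow> ('a \<Rightarrow> 'a \<Rightarrow> real) \<Rightarrow> bool" where
  "geod_complete_left_inv br g \<longleftrightarrow> (\<forall>u0. \<exists>u::real \<Rightarrow> 'a. u 0 = u0 \<and>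
     (\<forall>t. (u has_vector_derivative (- LC_conn br g (u t) (u t))) (at t)))"

end

theory Submission
  imports Defs
begin

text \<open>
  In a Lie algebra of step at most 3 the derived algebra \<open>W = [\<G>, \<G>]\<close> is abelian and
  \<open>[\<G>, W]\<close> is central. With a linear retraction \<open>P\<close> onto \<open>W\<close>, the maps
  \<open>d = id + P/3\<close> and \<open>f = (2/3)(id - P/3)\<close> satisfy \<open>d[x,y] = [dx,fy] + [fx,dy]\<close>, and \<open>f\<close> is a
  homomorphism modulo the centre. For the metric \<open>k(d\<cdot>, d\<cdot>)\<close>, ad-invariance of \<open>k\<close> turns the
  Koszul formula into \<open>\<nabla>\<^sub>x y = d\<^sup>-\<^sup>1[fx, dy]\<close>; by Jacobi the curvature is then
  \<open>d\<^sup>-\<^sup>1[[fx,fy] - f[x,y], dz] = 0\<close>. Finally \<open>\<nabla>\<^sub>u u = [u, Pu]/3\<close> is central and lies in \<open>W\<close>,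
  so it is constant along the line \<open>u - t \<nabla>\<^sub>u u\<close>, which is therefore a complete geodesic.
\<close>

lemma linear_retraction_exists:
  fixes V :: "'a::real_vector set"
  assumes "subspace V"
  shows "\<exists>P. linear P \<and> range P \<subseteq> V \<and> (\<forall>v\<in>V. P v = v)"
  using linear_exists_left_inverse_on[OF linear_id assms] by auto

lemma LC_conn_eqI:
  assumes lin: "\<And>z. linear (\<lambda>w. g w z)"
    and nondeg: "\<And>w. (\<forall>z. g w z = 0) \<Longrightarrow> w = 0"
    and koszul: "\<And>z. 2 * g w z = g (br x y) z - g (br y z) x + g (br z x) y"
  shows "LC_conn br g x y = w"
  unfolding LC_conn_def
proof (rule the_equality)
  fix w'
  assume w': "\<forall>z. 2 * g w' z = g (br x y) z - g (br y z) x + g (br z x) y"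
  have "g w' z = g w z" for z
    using w'[rule_format, of z] koszul[of z] by simp
  then have "g (w' - w) z = 0" for z
    by (simp add: linear_diff[OF lin])
  then show "w' = w"
    using nondeg[of "w' - w"] by simp
qed (use koszul in blast)

lemma geod_complete_left_invI:
  fixes br :: "'a::real_normed_vector \<Rightarrow> 'a \<Rightarrow> 'a"
  assumes "\<And>u t. LC_conn br g (u - t *\<^sub>R LC_conn br g u u) (u - t *\<^sub>R LC_conn br g u u)
                  = LC_conn br g u u"
  shows "geod_complete_left_inv br g"
  unfolding geod_complete_left_inv_def
proof
  fix u0
  let ?u = "\<lambda>t. u0 - t *\<^sub>R LC_conn br g u0 u0"
  have "(?u has_vector_derivative - LC_conn br g (?u t) (?u t)) (at t)" for t
    unfolding assms by (auto intro!: derivative_eq_intros)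
  then show "\<exists>u. u 0 = u0 \<and> (\<forall>t. (u has_vector_derivative - LC_conn br g (u t) (u t)) (at t))"
    by (intro exI[of _ ?u]) simp
qed

lemma scaleR_collect:
  fixes v :: "'a::real_vector"
  shows "a *\<^sub>R v + b *\<^sub>R v = (a + b) *\<^sub>R v" and "v + b *\<^sub>R v = (1 + b) *\<^sub>R v"
    and "b *\<^sub>R v + v = (b + 1) *\<^sub>R v" and "v + v = 2 *\<^sub>R v"
    and "a *\<^sub>R v - b *\<^sub>R v = (a - b) *\<^sub>R v" and "v - b *\<^sub>R v = (1 - b) *\<^sub>R v"
    and "b *\<^sub>R v - v = (b - 1) *\<^sub>R v"
  by (simp_all add: algebra_simps scaleR_2)

locale lie_alg =
  fixes br :: "'a::real_vector \<Rightarrow> 'a \<Rightarrow> 'a"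
  assumes lie_algebra: "lie_algebra br"
begin

lemma linear_br_right: "linear (br x)"
  using lie_algebra by (simp add: lie_algebra_def bilin_def)

lemma linear_br_left: "linear (\<lambda>x. br x y)"
  using lie_algebra by (simp add: lie_algebra_def bilin_def)

lemma br_self [simp]: "br x x = 0"
  using lie_algebra by (simp add: lie_algebra_def)

lemma jacobi: "br x (br y z) + br y (br z x) + br z (br x y) = 0"
  using lie_algebra by (simp add: lie_algebra_def)

lemmas br_simps [simp] =
  linear_add[OF linear_br_left] linear_add[OF linear_br_right]
  linear_diff[OF linear_br_left] linear_diff[OF linear_br_right]
  linear_cmul[OF linear_br_left] linear_cmul[OF linear_br_right]
  linear_neg[OF linear_br_left] linear_neg[OF linear_br_right]
  linear_0[OF linear_br_left] linear_0[OF linear_br_right]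

lemma br_skew: "br y x = - br x y"
proof -
  have "br (x + y) (x + y) = br x x + br y x + (br x y + br y y)"
    by (simp only: br_simps)
  then have "br x y + br y x = 0" by (simp add: add.commute)
  then show ?thesis by (simp add: eq_neg_iff_add_eq_0 add.commute)
qed

lemma jacobi_derivation: "br x (br y z) - br y (br x z) = br (br x y) z"
  using jacobi[of x y z] br_skew[of z x] br_skew[of z "br x y"]
  by (simp add: algebra_simps)

definition derived :: "'a set" where
  "derived = span {br x y | x y. True}"

lemma br_in_derived: "br x y \<in> derived"
  unfolding derived_def by (rule span_base) blast

lemma subspace_derived: "subspace derived"
  unfolding derived_def by (rule subspace_span)

end

locale nilpotent3_lie_alg = lie_alg +
  assumes nilpotent3: "br x (br y (br z w)) = 0"
begin

lemma br_derived_in_center: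
  assumes "w \<in> derived"
  shows "br x w \<in> center br"
proof -
  have "br z (br x w) = 0" for z
    using linear_compose[OF linear_br_right linear_br_right, unfolded o_def]
    by (rule linear_eq_0_on_span[OF _ _ assms[unfolded derived_def]]) (auto simp: nilpotent3)
  then show ?thesis
    unfolding center_def by (simp add: br_skew[of _ "br x w"])
qed

lemma derived_abelian:
  assumes "v \<in> derived" "w \<in> derived"
  shows "br v w = 0"
proof -
  have brackets: "br (br a b) (br c e) = 0" for a b c e
  proof -
    have "br (br c e) (br a b) = 0"
      using jacobi[of a b "br c e"] by (simp add: nilpotent3 br_skew[of "br c e" a])
    then show ?thesis
      by (simp add: br_skew[of "br a b"])
  qed
  have v_brackets: "br v (br c e) = 0" for c e
    by (rule linear_eq_0_on_span[OF linear_br_left _ assms(1)[unfolded derived_def]])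
      (auto simp: brackets)
  show ?thesis
    by (rule linear_eq_0_on_span[OF linear_br_right _ assms(2)[unfolded derived_def]])
      (auto simp: v_brackets)
qed

end

locale quadratic_lie_alg =
  fixes br :: "'a::real_vector \<Rightarrow> 'a \<Rightarrow> 'a" and k :: "'a \<Rightarrow> 'a \<Rightarrow> real"
  assumes quadratic: "quadratic_lie_algebra br k"
begin

sublocale lie_alg br
  using quadratic by unfold_locales (simp add: quadratic_lie_algebra_def)

lemma linear_k_left: "linear (\<lambda>x. k x y)"
  using quadratic by (simp add: quadratic_lie_algebra_def bilin_def)

lemma k_sym: "k x y = k y x"
  using quadratic by (simp add: quadratic_lie_algebra_def)

lemma k_nondegenerate: "(\<forall>y. k x y = 0) \<Longrightarrow> x = 0"
  using quadratic by (simp add: quadratic_lie_algebra_def)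

lemma k_invariant: "k (br x y) z + k y (br x z) = 0"
  using quadratic unfolding quadratic_lie_algebra_def by blast

lemma k_br_cyclic: "k (br a b) c = k (br c a) b"
proof -
  have "k (br a b) c = - k (br a c) b"
    using k_invariant[of a b c] k_sym[of b] by simp
  also have "\<dots> = k (br c a) b"
    using br_skew[of c a] linear_neg[OF linear_k_left] by simp
  finally show ?thesis .
qed

lemma LC_conn_twisted_derivation:
  assumes "linear d" "bij d"
    and der: "\<And>x y. d (br x y) = br (d x) (f y) + br (f x) (d y)"
  shows "LC_conn br (\<lambda>x y. k (d x) (d y)) x y = inv d (br (f x) (d y))"
proof (rule LC_conn_eqI)
  have d_inv: "d (inv d v) = v" for v
    using \<open>bij d\<close> by (simp add: bij_is_surj surj_f_inv_f)
  show "linear (\<lambda>w. k (d w) (d z))" for z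
    using linear_compose[OF \<open>linear d\<close> linear_k_left] by (simp add: o_def)
  show "w = 0" if "\<forall>z. k (d w) (d z) = 0" for w
  proof -
    have "k (d w) v = 0" for v
      using that d_inv[of v] by metis
    then have "d w = 0" by (rule k_nondegenerate[rule_format])
    then show ?thesis
      using bij_is_inj[OF \<open>bij d\<close>] linear_injective_0[OF \<open>linear d\<close>] by blast
  qed
  show "2 * k (d (inv d (br (f x) (d y)))) (d z)
        = k (d (br x y)) (d z) - k (d (br y z)) (d x) + k (d (br z x)) (d y)" for z
    unfolding d_inv der
    using k_br_cyclic[of "d y" "f z" "d x"] k_br_cyclic[of "f z" "d x" "d y"]
      k_br_cyclic[of "f y" "d z" "d x"] k_br_cyclic[of "f x" "d y" "d z", symmetric]
    by (simp add: linear_add[OF linear_k_left])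
qed

lemma flat_twisted_derivation:
  assumes "linear d" "bij d"
    and der: "\<And>x y. d (br x y) = br (d x) (f y) + br (f x) (d y)"
    and hom: "\<And>x y. f (br x y) - br (f x) (f y) \<in> center br"
  shows "flat_left_inv br (\<lambda>x y. k (d x) (d y))"
  unfolding flat_left_inv_def LC_conn_twisted_derivation[where f = f, OF assms(1-3)]
proof (intro allI)
  fix x y z
  have d_inv: "d (inv d v) = v" for v
    using \<open>bij d\<close> by (simp add: bij_is_surj surj_f_inv_f)
  have "br (f x) (br (f y) (d z)) - br (f y) (br (f x) (d z)) - br (f (br x y)) (d z)
        = - br (f (br x y) - br (f x) (f y)) (d z)"
    by (simp add: jacobi_derivation)
  also have "\<dots> = 0"
    using hom[of x y] by (simp add: center_def)
  finally have "d (inv d (br (f x) (br (f y) (d z))) - inv d (br (f y) (br (f x) (d z)))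
                   - inv d (br (f (br x y)) (d z))) = 0"
    by (simp add: linear_diff[OF \<open>linear d\<close>] d_inv)
  then show "inv d (br (f x) (d (inv d (br (f y) (d z)))))
               - inv d (br (f y) (d (inv d (br (f x) (d z)))))
               - inv d (br (f (br x y)) (d z)) = 0"
    unfolding d_inv using bij_is_inj[OF \<open>bij d\<close>] linear_injective_0[OF \<open>linear d\<close>] by blast
qed

end

locale derived_retraction = nilpotent3_lie_alg +
  fixes P :: "'a \<Rightarrow> 'a"
  assumes linear_P: "linear P"
    and P_in_derived: "P x \<in> derived"
    and P_derived: "v \<in> derived \<Longrightarrow> P v = v"
begin

lemmas P_simps [simp] =
  linear_add[OF linear_P] linear_diff[OF linear_P] linear_cmul[OF linear_P]
  linear_neg[OF linear_P] linear_0[OF linear_P]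

lemma P_br [simp]: "P (br x y) = br x y"
  by (rule P_derived[OF br_in_derived])

lemma P_idem [simp]: "P (P x) = P x"
  by (rule P_derived[OF P_in_derived])

lemma br_P_P [simp]: "br (P x) (P y) = 0"
  by (rule derived_abelian[OF P_in_derived P_in_derived])

text \<open>
  For \<open>d = id + \<alpha>P\<close>, \<open>f = \<beta> id + \<gamma>P\<close> the twisted
  derivation identity forces \<open>1 + \<alpha> = 2\<beta>\<close> and \<open>\<gamma> = -\<alpha>\<beta>\<close>, and \<open>f\<close> being a homomorphism
  modulo the centre forces \<open>\<beta> = 1 - \<alpha>\<close>; hence \<open>\<alpha> = 1/3\<close>.
\<close>

definition dmap :: "'a \<Rightarrow> 'a" where
  "dmap x = x + (1/3) *\<^sub>R P x"

definition fmap :: "'a \<Rightarrow> 'a" where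
  "fmap x = (2/3) *\<^sub>R x - (2/9) *\<^sub>R P x"

lemma linear_dmap: "linear dmap"
  unfolding dmap_def by (rule linearI) (simp_all add: algebra_simps)

lemma linear_fmap: "linear fmap"
  unfolding fmap_def by (rule linearI) (simp_all add: algebra_simps)

lemma dmap_derived: "v \<in> derived \<Longrightarrow> dmap v = (4/3) *\<^sub>R v"
  unfolding dmap_def by (simp add: P_derived scaleR_collect)

lemma bij_dmap: "bij dmap"
proof (rule bij_betw_byWitness[where f' = "\<lambda>x. x - (1/4) *\<^sub>R P x"])
  show "\<forall>x\<in>UNIV. dmap x - (1/4) *\<^sub>R P (dmap x) = x"
    by (simp add: dmap_def algebra_simps) (simp add: scaleR_collect)
  show "\<forall>x\<in>UNIV. dmap (x - (1/4) *\<^sub>R P x) = x"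
    by (simp add: dmap_def algebra_simps) (simp add: scaleR_collect)
qed auto

lemma dmap_derivation: "dmap (br x y) = br (dmap x) (fmap y) + br (fmap x) (dmap y)"
  unfolding dmap_def fmap_def by (simp add: algebra_simps) (simp add: scaleR_collect)

lemma fmap_hom_mod_center: "fmap (br x y) - br (fmap x) (fmap y) \<in> center br"
proof -
  have "fmap (br x y) - br (fmap x) (fmap y) = (4/27) *\<^sub>R (br x (P y) + br (P x) y)"
    unfolding fmap_def by (simp add: algebra_simps) (simp add: scaleR_collect)
  moreover have "br x (P y) \<in> center br" "br y (P x) \<in> center br"
    by (simp_all add: br_derived_in_center P_in_derived)
  ultimately show ?thesis
    using br_skew[of y "P x"] by (simp add: center_def)
qed

lemma br_fmap_dmap_self: "br (fmap u) (dmap u) = (4/9) *\<^sub>R br u (P u)"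
  unfolding dmap_def fmap_def using br_skew[of u "P u"]
  by (simp add: algebra_simps) (simp add: scaleR_collect)

end

locale quadratic_derived_retraction =
  quadratic_lie_alg br k + derived_retraction br P
  for br :: "'a::real_normed_vector \<Rightarrow> 'a \<Rightarrow> 'a" and k P
begin

lemma LC_conn_dmap_diag: "LC_conn br (\<lambda>x y. k (dmap x) (dmap y)) u u = (1/3) *\<^sub>R br u (P u)"
proof -
  have "dmap ((1/3) *\<^sub>R br u (P u)) = (4/9) *\<^sub>R br u (P u)"
    using dmap_derived[OF br_in_derived] linear_cmul[OF linear_dmap] by simp
  then show ?thesis
    unfolding LC_conn_twisted_derivation[where f = fmap, OF linear_dmap bij_dmap dmap_derivation]
      br_fmap_dmap_self
    by (rule inv_f_eq[OF bij_is_inj[OF bij_dmap]])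
qed

lemma flat_dmap: "flat_left_inv br (\<lambda>x y. k (dmap x) (dmap y))"
  by (rule flat_twisted_derivation[where f = fmap,
        OF linear_dmap bij_dmap dmap_derivation fmap_hom_mod_center])

lemma geod_complete_dmap: "geod_complete_left_inv br (\<lambda>x y. k (dmap x) (dmap y))"
proof (rule geod_complete_left_invI, unfold LC_conn_dmap_diag)
  fix u and t :: real
  have "br (br u (P u)) v = 0" "br v (br u (P u)) = 0" for v
    using br_derived_in_center[OF P_in_derived, of u] br_skew[of v "br u (P u)"]
    by (simp_all add: center_def)
  then show "(1/3) *\<^sub>R br (u - t *\<^sub>R (1/3) *\<^sub>R br u (P u)) (P (u - t *\<^sub>R (1/3) *\<^sub>R br u (P u)))
             = (1/3) *\<^sub>R br u (P u)"
    by simp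
qed

end

theorem mainTheorem17:
  fixes br :: "'a::euclidean_space \<Rightarrow> 'a \<Rightarrow> 'a" and k :: "'a \<Rightarrow> 'a \<Rightarrow> real"
  assumes "quadratic_lie_algebra br k"
    and "\<forall>x y z w. br x (br y (br z w)) = 0"
  shows "\<exists>f d. linear f \<and> (\<forall>x y. f (br x y) - br (f x) (f y) \<in> center br)
           \<and> linear d \<and> bij d
           \<and> (\<forall>x y. d (br x y) = br (d x) (f y) + br (f x) (d y))
           \<and> flat_left_inv br (\<lambda>x y. k (d x) (d y))
           \<and> geod_complete_left_inv br (\<lambda>x y. k (d x) (d y))"
proof -
  interpret quadratic_lie_alg br k
    by (rule quadratic_lie_alg.intro[OF assms(1)])
  obtain P where "linear P" "range P \<subseteq> derived" "\<forall>v\<in>derived. P v = v"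
    using linear_retraction_exists[OF subspace_derived] by blast
  then have "quadratic_derived_retraction br k P"
    using assms lie_alg_axioms
    by (auto simp: quadratic_derived_retraction_def quadratic_lie_alg_def derived_retraction_def
        derived_retraction_axioms_def nilpotent3_lie_alg_def nilpotent3_lie_alg_axioms_def)
  then interpret quadratic_derived_retraction br k P .
  show ?thesis
    by (intro exI[of _ fmap] exI[of _ dmap] conjI allI linear_fmap fmap_hom_mod_center
        linear_dmap bij_dmap dmap_derivation flat_dmap geod_complete_dmap)
qed

end
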